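(* Let $K$ be a commutative ring, $R$ a $K$-algebra, $\mathcal{G}$ a finite groupoid and $\beta=(\{E_g\}_{g\in\mathcal G},\{\beta_g\}_{g\in\mathcal G})$ a unital action of $\mathcal G$ on $R$ such that $R=\bigoplus_{e\in\mathcal G_0}E_e$ and $R$ is a $\beta$-Galois extension of $R^\beta$. Let $H$ be a subgroupoid of $\mathcal G$ and put $R_H=\bigoplus_{e\in H_0}E_e$, where $H_0=H\cap\mathcal G_0$. Then $\beta_H=(\{E_h\}_{h\in H},\{\beta_h:E_{h^{-1}}\to E_h\}_{h\in H})$ is an action of $H$ on $R_H$, and $R_H$ is a $\beta_H$-Galois extension of $(R_H)^{\beta_H}$.
   Context: All rings and algebras are associative and unital. A groupoid is a nonempty set $\mathcal G$ with a partially defined associative multiplication in which every $g$ has an inverse $g^{-1}$, a left identity $r(g)=gg^{-1}$ and a right identity $d(g)=g^{-1}g$; the product $gh$ is defined iff $d(g)=r(h)$. $\mathcal G_0$ denotes the set of identities of $\mathcal G$. A subgroupoid is a nonempty subset $H$ closed under inverses and under those products that are defined. A unital action of $\mathcal G$ on a $K$-algebra $R$ is a pair $\beta=(\{E_g\},\{\beta_g\})$ where for each $g\in\mathcal G$, $E_g=E_{r(g)}$ is an ideal of $R$ which is a unital ring with identity $1_g$ (so $1_g=1_{r(g)}$ and $1_{g^{-1}}=1_{d(g)}$), $\beta_g:E_{g^{-1}}\to E_g$ is an isomorphism of $K$-algebras, $\beta_e=\mathrm{id}_{E_e}$ for all $e\in\mathcal G_0$, and $\beta_g(\beta_h(x))=\beta_{gh}(x)$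 whenever $d(g)=r(h)$ and $x\in E_{h^{-1}}$. For a subgroupoid $H$ acting on a ring $A$ via $\beta_H$, $A^{\beta_H}=\{a\in A:\beta_h(a1_{h^{-1}})=a1_h \text{ for all } h\in H\}$; $R^\beta=R^{\beta_{\mathcal G}}$. $A$ is a $\beta_H$-Galois extension of $A^{\beta_H}$ if $H$ is finite and there exist $x_1,\dots,x_m,y_1,\dots,y_m\in A$ with $\sum_{i=1}^m x_i\beta_h(y_i1_{h^{-1}})=1_h$ if $h\in H_0$ and $=0$ if $h\in H\setminus H_0$. *)

theory Defs
  imports Main
begin

text \<open>A groupoid is given by a carrier G, a multiplication m (meaningful only when
 defined) and an inversion i.  r g = g g^-1, d g = g^-1 g; gh is defined iff d g = r h.\<close>

definition gr_r :: "('g \<Rightarrow> 'g \<Rightarrow> 'g) \<Rightarrow> ('g \<Rightarrow> 'g) \<Rightarrow> 'g \<Rightarrow> 'g" where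
  "gr_r m i g = m g (i g)"

definition gr_d :: "('g \<Rightarrow> 'g \<Rightarrow> 'g) \<Rightarrow> ('g \<Rightarrow> 'g) \<Rightarrow> 'g \<Rightarrow> 'g" where
  "gr_d m i g = m (i g) g"

definition groupoid :: "'g set \<Rightarrow> ('g \<Rightarrow> 'g \<Rightarrow> 'g) \<Rightarrow> ('g \<Rightarrow> 'g) \<Rightarrow> bool" where
  "groupoid G m i \<longleftrightarrow>
     G \<noteq> {} \<and>
     (\<forall>g\<in>G. i g \<in> G \<and> i (i g) = g) \<and>
     (\<forall>g\<in>G. \<forall>h\<in>G. gr_d m i g = gr_r m i h \<longrightarrow>
        m g h \<in> G \<and> gr_r m i (m g h) = gr_r m i g \<and> gr_d m i (m g h) = gr_d m i h) \<and>
     (\<forall>g\<in>G. \<forall>h\<in>G. \<forall>k\<in>G. gr_d m i g = gr_r m i h \<and> gr_d m i h = gr_r m i k \<longrightarrow>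
        m (m g h) k = m g (m h k)) \<and>
     (\<forall>g\<in>G. m (gr_r m i g) g = g \<and> m g (gr_d m i g) = g)"

text \<open>The set of identities G_0.  For a subgroupoid H this is H \<inter> G_0.\<close>
definition gr_ids :: "'g set \<Rightarrow> ('g \<Rightarrow> 'g \<Rightarrow> 'g) \<Rightarrow> ('g \<Rightarrow> 'g) \<Rightarrow> 'g set" where
  "gr_ids G m i = gr_r m i ` G"

definition subgroupoid :: "'g set \<Rightarrow> 'g set \<Rightarrow> ('g \<Rightarrow> 'g \<Rightarrow> 'g) \<Rightarrow> ('g \<Rightarrow> 'g) \<Rightarrow> bool" where
  "subgroupoid H G m i \<longleftrightarrow> H \<noteq> {} \<and> H \<subseteq> G \<and>
     (\<forall>h\<in>H. i h \<in> H) \<and>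
     (\<forall>g\<in>H. \<forall>h\<in>H. gr_d m i g = gr_r m i h \<longrightarrow> m g h \<in> H)"

text \<open>The K-algebra structure of the ambient ring 'r is given by a ring homomorphism
 phi from K into the centre of 'r.\<close>
definition alg_map :: "('k::comm_ring_1 \<Rightarrow> 'r::ring_1) \<Rightarrow> bool" where
  "alg_map \<phi> \<longleftrightarrow> \<phi> 1 = 1 \<and> (\<forall>a b. \<phi> (a + b) = \<phi> a + \<phi> b) \<and>
     (\<forall>a b. \<phi> (a * b) = \<phi> a * \<phi> b) \<and> (\<forall>a x. \<phi> a * x = x * \<phi> a)"

definition is_unit_of :: "'r::ring_1 set \<Rightarrow> 'r \<Rightarrow> bool" where
  "is_unit_of A u \<longleftrightarrow> u \<in> A \<and> (\<forall>x\<in>A. u * x = x \<and> x * u = x)"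

definition one_of :: "'r::ring_1 set \<Rightarrow> 'r" where
  "one_of A = (THE u. is_unit_of A u)"

text \<open>A (unital) K-subalgebra A of 'r, possibly with its own identity different from 1.\<close>
definition k_algebra_set :: "('k::comm_ring_1 \<Rightarrow> 'r::ring_1) \<Rightarrow> 'r set \<Rightarrow> bool" where
  "k_algebra_set \<phi> A \<longleftrightarrow> 0 \<in> A \<and> (\<forall>x\<in>A. \<forall>y\<in>A. x + y \<in> A \<and> x * y \<in> A) \<and>
     (\<forall>x\<in>A. - x \<in> A) \<and> (\<forall>k. \<forall>x\<in>A. \<phi> k * x \<in> A) \<and> (\<exists>u. is_unit_of A u)"

definition ideal_in :: "'r::ring_1 set \<Rightarrow> 'r set \<Rightarrow> bool" where
  "ideal_in A I \<longleftrightarrow> I \<subseteq> A \<and> 0 \<in> I \<and> (\<forall>x\<in>I. \<forall>y\<in>I. x + y \<in> I) \<and> (\<forall>x\<in>I. - x \<in> I) \<and>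
     (\<forall>a\<in>A. \<forall>x\<in>I. a * x \<in> I \<and> x * a \<in> I)"

definition k_alg_iso :: "('k::comm_ring_1 \<Rightarrow> 'r::ring_1) \<Rightarrow> ('r \<Rightarrow> 'r) \<Rightarrow> 'r set \<Rightarrow> 'r set \<Rightarrow> bool" where
  "k_alg_iso \<phi> f A B \<longleftrightarrow> bij_betw f A B \<and>
     (\<forall>x\<in>A. \<forall>y\<in>A. f (x + y) = f x + f y \<and> f (x * y) = f x * f y) \<and>
     (\<forall>k. \<forall>x\<in>A. f (\<phi> k * x) = \<phi> k * f x)"

definition unital_action ::
  "('k::comm_ring_1 \<Rightarrow> 'r::ring_1) \<Rightarrow> 'g set \<Rightarrow> ('g \<Rightarrow> 'g \<Rightarrow> 'g) \<Rightarrow> ('g \<Rightarrow> 'g) \<Rightarrow> 'r set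
    \<Rightarrow> ('g \<Rightarrow> 'r set) \<Rightarrow> ('g \<Rightarrow> 'r \<Rightarrow> 'r) \<Rightarrow> bool" where
  "unital_action \<phi> G m i A E \<beta> \<longleftrightarrow>
     k_algebra_set \<phi> A \<and>
     (\<forall>g\<in>G. ideal_in A (E g) \<and> E g = E (gr_r m i g) \<and> (\<exists>u. is_unit_of (E g) u)) \<and>
     (\<forall>g\<in>G. k_alg_iso \<phi> (\<beta> g) (E (i g)) (E g)) \<and>
     (\<forall>e\<in>gr_ids G m i. \<forall>x\<in>E e. \<beta> e x = x) \<and>
     (\<forall>g\<in>G. \<forall>h\<in>G. gr_d m i g = gr_r m i h \<longrightarrow>
        (\<forall>x\<in>E (i h). \<beta> g (\<beta> h x) = \<beta> (m g h) x))"

definition fixed_ring ::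
  "'g set \<Rightarrow> ('g \<Rightarrow> 'g) \<Rightarrow> 'r::ring_1 set \<Rightarrow> ('g \<Rightarrow> 'r set) \<Rightarrow> ('g \<Rightarrow> 'r \<Rightarrow> 'r) \<Rightarrow> 'r set" where
  "fixed_ring H i A E \<beta> =
     {a \<in> A. \<forall>h\<in>H. \<beta> h (a * one_of (E (i h))) = a * one_of (E h)}"

definition galois_ext ::
  "'g set \<Rightarrow> ('g \<Rightarrow> 'g \<Rightarrow> 'g) \<Rightarrow> ('g \<Rightarrow> 'g) \<Rightarrow> 'r::ring_1 set \<Rightarrow> 'r set
    \<Rightarrow> ('g \<Rightarrow> 'r set) \<Rightarrow> ('g \<Rightarrow> 'r \<Rightarrow> 'r) \<Rightarrow> bool" where
  "galois_ext H m i A B E \<beta> \<longleftrightarrow>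
     B = fixed_ring H i A E \<beta> \<and> finite H \<and>
     (\<exists>(n::nat) x y. (\<forall>j<n. x j \<in> A \<and> y j \<in> A) \<and>
        (\<forall>h\<in>H. (\<Sum>j<n. x j * \<beta> h (y j * one_of (E (i h)))) =
                 (if h \<in> gr_ids H m i then one_of (E h) else 0)))"

definition internal_direct_sum :: "'r::ring_1 set \<Rightarrow> ('g \<Rightarrow> 'r set) \<Rightarrow> 'g set \<Rightarrow> bool" where
  "internal_direct_sum A E S \<longleftrightarrow> finite S \<and> (\<forall>e\<in>S. E e \<subseteq> A) \<and>
     (\<forall>x\<in>A. \<exists>!f. (\<forall>e\<in>S. f e \<in> E e) \<and> (\<forall>e. e \<notin> S \<longrightarrow> f e = 0) \<and> x = (\<Sum>e\<in>S. f e))"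

text \<open>The sum of the ideals E e, e in S (direct inside R under the hypotheses).\<close>
definition sum_of_ideals :: "('g \<Rightarrow> 'r::ring_1 set) \<Rightarrow> 'g set \<Rightarrow> 'r set" where
  "sum_of_ideals E S = {x. \<exists>f. (\<forall>e\<in>S. f e \<in> E e) \<and> x = (\<Sum>e\<in>S. f e)}"

end

theory Submission
  imports Defs
begin

text \<open>The idempotents \<open>1\<^sub>e\<close>, \<open>e \<in> H\<^sub>0\<close>, are pairwise orthogonal because the ideals \<open>E\<^sub>e\<close> meet
  trivially, so \<open>u = \<Sum>e\<in>H\<^sub>0. 1\<^sub>e\<close> is the identity of \<open>R\<^sub>H\<close> and multiplication by \<open>u\<close> projects
  \<open>R\<close> onto \<open>R\<^sub>H\<close>. The action of \<open>H\<close> is just the restriction of \<open>\<beta>\<close>. If \<open>x\<^sub>j, y\<^sub>j\<close> are Galois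
  coordinates for \<open>R\<close>, then \<open>x\<^sub>j u, y\<^sub>j u\<close> are Galois coordinates for \<open>R\<^sub>H\<close>: for \<open>h \<in> H\<close> the
  factors \<open>u\<close> are absorbed by \<open>1\<^bsub>h\<^sup>-\<^sup>1\<^esub>\<close> and by \<open>\<beta>\<^sub>h(\<dots>) \<in> E\<^sub>h\<close>, and an element of \<open>H\<close> is an
  identity of \<open>H\<close> exactly when it is an identity of \<open>G\<close>.\<close>

lemma gr_r_idem:
  assumes "groupoid G m i" "g \<in> G"
  shows "gr_r m i (gr_r m i g) = gr_r m i g"
proof -
  have "i g \<in> G" "i (i g) = g" using assms unfolding groupoid_def by auto
  hence "gr_d m i g = gr_r m i (i g)" unfolding gr_d_def gr_r_def by simp
  hence "gr_r m i (m g (i g)) = gr_r m i g" using assms \<open>i g \<in> G\<close> unfolding groupoid_def by blast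
  thus ?thesis by (simp add: gr_r_def[of m i g])
qed

lemma gr_ids_subgroupoid_iff:
  assumes "groupoid G m i" "subgroupoid H G m i" "h \<in> H"
  shows "h \<in> gr_ids H m i \<longleftrightarrow> h \<in> gr_ids G m i"
proof
  assume "h \<in> gr_ids H m i"
  thus "h \<in> gr_ids G m i" using assms(2) unfolding subgroupoid_def gr_ids_def by blast
next
  assume "h \<in> gr_ids G m i"
  then obtain g where "g \<in> G" "h = gr_r m i g" unfolding gr_ids_def by auto
  hence "h = gr_r m i h" using gr_r_idem[OF assms(1)] by simp
  thus "h \<in> gr_ids H m i" using assms(3) unfolding gr_ids_def by blast
qed

lemma one_of_eq: "is_unit_of A u \<Longrightarrow> one_of A = u"
  unfolding one_of_def is_unit_of_def by (rule the_equality) (blast, metis)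

lemma internal_direct_sum_inter_zero:
  fixes E :: "'g \<Rightarrow> 'r::ring_1 set"
  assumes "internal_direct_sum UNIV E S" "\<forall>a\<in>S. 0 \<in> E a"
    and "e \<in> S" "e' \<in> S" "e \<noteq> e'" "z \<in> E e" "z \<in> E e'"
  shows "z = 0"
proof -
  define P where "P f \<longleftrightarrow> (\<forall>a\<in>S. f a \<in> E a) \<and> (\<forall>a. a \<notin> S \<longrightarrow> f a = 0) \<and> z = (\<Sum>a\<in>S. f a)"
    for f :: "'g \<Rightarrow> 'r"
  define f where "f c = (\<lambda>a. if a = c then z else 0)" for c :: 'g
  have "finite S" using assms(1) unfolding internal_direct_sum_def by auto
  hence "P (f c)" if "c \<in> S" "z \<in> E c" for c
    using assms(2) that unfolding P_def f_def by (auto simp: sum.delta)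
  moreover have "\<exists>!g. P g"
    using assms(1) unfolding internal_direct_sum_def P_def by auto
  ultimately have "f e = f e'"
    using assms(3,4,6,7) by (metis (no_types))
  hence "f e e = f e' e" by simp
  thus ?thesis using assms(5) unfolding f_def by simp
qed

lemma sum_of_idealsE:
  assumes "x \<in> sum_of_ideals E T"
  obtains f where "\<forall>e\<in>T. f e \<in> E e" "x = (\<Sum>e\<in>T. f e)"
  using assms unfolding sum_of_ideals_def by blast

locale unital_ideal_family =
  fixes E :: "'g \<Rightarrow> 'r::ring_1 set" and S :: "'g set"
  assumes ideal: "e \<in> S \<Longrightarrow> ideal_in UNIV (E e)"
    and unital: "e \<in> S \<Longrightarrow> \<exists>u. is_unit_of (E e) u"
    and inter_zero: "e \<in> S \<Longrightarrow> e' \<in> S \<Longrightarrow> e \<noteq> e' \<Longrightarrow> z \<in> E e \<Longrightarrow> z \<in> E e' \<Longrightarrow> z = 0"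
begin

lemma is_unit_of_one_of: "e \<in> S \<Longrightarrow> is_unit_of (E e) (one_of (E e))"
  using unital one_of_eq by metis

lemma zero_mem: "e \<in> S \<Longrightarrow> 0 \<in> E e"
  using ideal unfolding ideal_in_def by blast

lemma mult_mem:
  assumes "e \<in> S" "x \<in> E e"
  shows "a * x \<in> E e" "x * a \<in> E e"
  using ideal[OF assms(1)] assms(2) unfolding ideal_in_def by auto

lemma mult_orthogonal:
  assumes "e \<in> S" "e' \<in> S" "e \<noteq> e'" "x \<in> E e" "y \<in> E e'"
  shows "x * y = 0"
  using inter_zero[OF assms(1-3)] mult_mem assms by blast

lemma sum_one_of_mult:
  assumes "finite T" "T \<subseteq> S" "e \<in> T" "x \<in> E e"
  shows "(\<Sum>a\<in>T. one_of (E a)) * x = x" "x * (\<Sum>a\<in>T. one_of (E a)) = x"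
proof -
  have e: "e \<in> S" using assms by blast
  have one: "one_of (E a) \<in> E a" if "a \<in> T" for a
    using is_unit_of_one_of[of a] that assms(2) unfolding is_unit_of_def by blast
  have "(\<Sum>a\<in>T. one_of (E a)) * x = one_of (E e) * x + (\<Sum>a\<in>T-{e}. one_of (E a) * x)"
    by (simp add: sum.remove[OF assms(1,3)] distrib_right sum_distrib_right)
  also have "\<dots> = x"
    using is_unit_of_one_of[OF e] assms mult_orthogonal[OF _ e _ one] unfolding is_unit_of_def
    by (auto intro!: sum.neutral)
  finally show "(\<Sum>a\<in>T. one_of (E a)) * x = x" .
  have "x * (\<Sum>a\<in>T. one_of (E a)) = x * one_of (E e) + (\<Sum>a\<in>T-{e}. x * one_of (E a))"
    by (simp add: sum.remove[OF assms(1,3)] distrib_left sum_distrib_left)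
  also have "\<dots> = x"
    using is_unit_of_one_of[OF e] assms mult_orthogonal[OF e _ _ _ one] unfolding is_unit_of_def
    by (auto intro!: sum.neutral)
  finally show "x * (\<Sum>a\<in>T. one_of (E a)) = x" .
qed

lemma sum_mem_sum_of_ideals: "(\<And>e. e \<in> T \<Longrightarrow> f e \<in> E e) \<Longrightarrow> (\<Sum>e\<in>T. f e) \<in> sum_of_ideals E T"
  unfolding sum_of_ideals_def by blast

lemma mem_sum_of_ideals:
  assumes "finite T" "T \<subseteq> S" "e \<in> T" "x \<in> E e"
  shows "x \<in> sum_of_ideals E T"
proof -
  have "(\<Sum>a\<in>T. if a = e then x else 0) \<in> sum_of_ideals E T"
    using assms zero_mem by (intro sum_mem_sum_of_ideals) auto
  thus ?thesis using assms by (simp add: sum.delta)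
qed

lemma sum_of_ideals_mult:
  assumes "T \<subseteq> S" "x \<in> sum_of_ideals E T"
  shows "a * x \<in> sum_of_ideals E T" "x * a \<in> sum_of_ideals E T"
proof -
  obtain f where f: "\<forall>e\<in>T. f e \<in> E e" "x = (\<Sum>e\<in>T. f e)"
    using assms(2) by (rule sum_of_idealsE)
  show "a * x \<in> sum_of_ideals E T"
    unfolding f(2) sum_distrib_left using f(1) assms(1) mult_mem
    by (intro sum_mem_sum_of_ideals) blast
  show "x * a \<in> sum_of_ideals E T"
    unfolding f(2) sum_distrib_right using f(1) assms(1) mult_mem
    by (intro sum_mem_sum_of_ideals) blast
qed

lemma sum_of_ideals_add:
  assumes "T \<subseteq> S" "x \<in> sum_of_ideals E T" "y \<in> sum_of_ideals E T"
  shows "x + y \<in> sum_of_ideals E T"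
proof -
  obtain f g where fg: "\<forall>e\<in>T. f e \<in> E e" "x = (\<Sum>e\<in>T. f e)" "\<forall>e\<in>T. g e \<in> E e" "y = (\<Sum>e\<in>T. g e)"
    using sum_of_idealsE[OF assms(2)] sum_of_idealsE[OF assms(3)] by metis
  show ?thesis
    unfolding fg(2,4) sum.distrib[symmetric] using fg(1,3) assms(1) ideal
    unfolding ideal_in_def by (intro sum_mem_sum_of_ideals) blast
qed

lemma is_unit_of_sum_of_ideals:
  assumes "finite T" "T \<subseteq> S"
  shows "is_unit_of (sum_of_ideals E T) (\<Sum>e\<in>T. one_of (E e))"
proof -
  have "x * (\<Sum>e\<in>T. one_of (E e)) = x" if x: "x \<in> sum_of_ideals E T" for x
  proof -
    obtain f where f: "\<forall>e\<in>T. f e \<in> E e" "x = (\<Sum>e\<in>T. f e)"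
      using x by (rule sum_of_idealsE)
    thus ?thesis using sum_one_of_mult(2)[OF assms] by (simp add: sum_distrib_right)
  qed
  moreover have "(\<Sum>e\<in>T. one_of (E e)) * x = x" if x: "x \<in> sum_of_ideals E T" for x
  proof -
    obtain f where f: "\<forall>e\<in>T. f e \<in> E e" "x = (\<Sum>e\<in>T. f e)"
      using x by (rule sum_of_idealsE)
    thus ?thesis using sum_one_of_mult(1)[OF assms] by (simp add: sum_distrib_left)
  qed
  moreover have "(\<Sum>e\<in>T. one_of (E e)) \<in> sum_of_ideals E T"
    using assms is_unit_of_one_of unfolding is_unit_of_def by (intro sum_mem_sum_of_ideals) blast
  ultimately show ?thesis unfolding is_unit_of_def by blast
qed

lemma k_algebra_set_sum_of_ideals:
  assumes "finite T" "T \<subseteq> S"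
  shows "k_algebra_set \<phi> (sum_of_ideals E T)"
proof -
  have "(\<Sum>e\<in>T. 0) \<in> sum_of_ideals E T"
    using assms(2) zero_mem by (intro sum_mem_sum_of_ideals) blast
  moreover have "- x \<in> sum_of_ideals E T" if "x \<in> sum_of_ideals E T" for x
    using sum_of_ideals_mult(1)[OF assms(2) that, of "- 1"] by simp
  ultimately show ?thesis
    using sum_of_ideals_add[OF assms(2)] sum_of_ideals_mult[OF assms(2)]
      is_unit_of_sum_of_ideals[OF assms]
    unfolding k_algebra_set_def by auto
qed

end

lemma unital_action_ideal:
  assumes "unital_action \<phi> G m i A E \<beta>" "g \<in> G"
  shows "ideal_in A (E g)"
  using conjunct1[OF conjunct2[OF assms(1)[unfolded unital_action_def]]] assms(2) by blast

lemma unital_action_bij_betw: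
  assumes "unital_action \<phi> G m i A E \<beta>" "g \<in> G"
  shows "bij_betw (\<beta> g) (E (i g)) (E g)"
  using conjunct1[OF conjunct2[OF conjunct2[OF assms(1)[unfolded unital_action_def]]]] assms(2)
  unfolding k_alg_iso_def by blast

lemma unital_action_is_unit_of_one_of:
  assumes "unital_action \<phi> G m i A E \<beta>" "g \<in> G"
  shows "is_unit_of (E g) (one_of (E g))"
proof -
  obtain u where "is_unit_of (E g) u" using assms unfolding unital_action_def by blast
  thus ?thesis using one_of_eq by metis
qed

lemma unital_ideal_family_gr_ids:
  assumes "unital_action \<phi> G m i UNIV E \<beta>" "internal_direct_sum UNIV E (gr_ids G m i)"
  shows "unital_ideal_family E (gr_ids G m i)"
proof -
  have ideal: "ideal_in UNIV (E e)" and "\<exists>u. is_unit_of (E e) u" if "e \<in> gr_ids G m i" for e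
  proof -
    obtain g where "g \<in> G" "e = gr_r m i g" using \<open>e \<in> gr_ids G m i\<close> unfolding gr_ids_def by blast
    thus "ideal_in UNIV (E e)" "\<exists>u. is_unit_of (E e) u"
      using assms(1) unfolding unital_action_def by metis+
  qed
  moreover have "\<forall>a\<in>gr_ids G m i. 0 \<in> E a"
    using ideal unfolding ideal_in_def by blast
  ultimately show ?thesis
    using internal_direct_sum_inter_zero[OF assms(2)] by unfold_locales blast+
qed

lemma unital_action_subgroupoid:
  assumes G: "unital_action \<phi> G m i UNIV E \<beta>" and H: "subgroupoid H G m i"
    and A: "k_algebra_set \<phi> A" "\<forall>h\<in>H. E h \<subseteq> A"
  shows "unital_action \<phi> H m i A E \<beta>"
proof -
  have HG: "H \<subseteq> G" and "gr_ids H m i \<subseteq> gr_ids G m i"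
    using H unfolding subgroupoid_def gr_ids_def by auto
  hence "\<forall>g\<in>H. k_alg_iso \<phi> (\<beta> g) (E (i g)) (E g)"
    and "\<forall>e\<in>gr_ids H m i. \<forall>x\<in>E e. \<beta> e x = x"
    and "\<forall>g\<in>H. \<forall>h\<in>H. gr_d m i g = gr_r m i h \<longrightarrow>
           (\<forall>x\<in>E (i h). \<beta> g (\<beta> h x) = \<beta> (m g h) x)"
    using G unfolding unital_action_def by blast+
  moreover have "\<forall>g\<in>H. ideal_in A (E g) \<and> E g = E (gr_r m i g) \<and> (\<exists>u. is_unit_of (E g) u)"
  proof
    fix h assume h: "h \<in> H"
    have "ideal_in UNIV (E h) \<and> E h = E (gr_r m i h) \<and> (\<exists>u. is_unit_of (E h) u)"
      using G h HG unfolding unital_action_def by blast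
    thus "ideal_in A (E h) \<and> E h = E (gr_r m i h) \<and> (\<exists>u. is_unit_of (E h) u)"
      using A(2) h unfolding ideal_in_def by blast
  qed
  ultimately show ?thesis using A(1) unfolding unital_action_def by blast
qed

lemma galois_ext_subgroupoid:
  assumes G: "groupoid G m i" "unital_action \<phi> G m i UNIV E \<beta>" "galois_ext G m i UNIV B E \<beta>"
    and H: "subgroupoid H G m i"
    and u: "\<forall>x. x * u \<in> A" "\<forall>h\<in>H. \<forall>z\<in>E h. u * z = z"
  shows "galois_ext H m i A (fixed_ring H i A E \<beta>) E \<beta>"
proof -
  have HG: "H \<subseteq> G" and Hi: "\<forall>h\<in>H. i h \<in> H" using H unfolding subgroupoid_def by auto
  obtain n :: nat and x y where xy: "\<forall>h\<in>G. (\<Sum>j<n. x j * \<beta> h (y j * one_of (E (i h)))) =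
      (if h \<in> gr_ids G m i then one_of (E h) else 0)"
    using G(3) unfolding galois_ext_def by blast
  define x' y' where "x' j = x j * u" and "y' j = y j * u" for j
  have "(\<Sum>j<n. x' j * \<beta> h (y' j * one_of (E (i h)))) =
      (if h \<in> gr_ids H m i then one_of (E h) else 0)" if h: "h \<in> H" for h
  proof -
    have ih: "i h \<in> H" "i h \<in> G" "h \<in> G" using Hi HG h by auto
    have one: "one_of (E (i h)) \<in> E (i h)"
      using unital_action_is_unit_of_one_of[OF G(2) ih(2)] unfolding is_unit_of_def by blast
    hence "y j * one_of (E (i h)) \<in> E (i h)" for j
      using unital_action_ideal[OF G(2) ih(2)] unfolding ideal_in_def by blast
    hence "\<beta> h (y j * one_of (E (i h))) \<in> E h" for j
      using bij_betw_apply[OF unital_action_bij_betw[OF G(2) ih(3)]] by blast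
    moreover have "(y j * u) * one_of (E (i h)) = y j * one_of (E (i h))" for j
      using u(2) ih(1) one by (simp add: mult.assoc)
    ultimately show ?thesis
      using xy ih(3) u(2) h gr_ids_subgroupoid_iff[OF G(1) H h] by (simp add: x'_def y'_def mult.assoc)
  qed
  moreover have "\<forall>j<n. x' j \<in> A \<and> y' j \<in> A" using u(1) unfolding x'_def y'_def by blast
  moreover have "finite H" using G(3) HG finite_subset unfolding galois_ext_def by blast
  ultimately show ?thesis
    unfolding galois_ext_def
    by (intro conjI refl) (assumption, rule exI[of _ n], rule exI[of _ x'], rule exI[of _ y'], blast)
qed

theorem mainTheorem1:
  fixes \<phi> :: "'k::comm_ring_1 \<Rightarrow> 'r::ring_1"
    and G H :: "'g set" and m :: "'g \<Rightarrow> 'g \<Rightarrow> 'g" and i :: "'g \<Rightarrow> 'g"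
    and E :: "'g \<Rightarrow> 'r set" and \<beta> :: "'g \<Rightarrow> 'r \<Rightarrow> 'r"
  assumes "alg_map \<phi>"
    and "groupoid G m i" and "finite G"
    and "unital_action \<phi> G m i UNIV E \<beta>"
    and "internal_direct_sum UNIV E (gr_ids G m i)"
    and "galois_ext G m i UNIV (fixed_ring G i UNIV E \<beta>) E \<beta>"
    and "subgroupoid H G m i"
  shows "unital_action \<phi> H m i (sum_of_ideals E (gr_ids H m i)) E \<beta>
    \<and> galois_ext H m i (sum_of_ideals E (gr_ids H m i))
        (fixed_ring H i (sum_of_ideals E (gr_ids H m i)) E \<beta>) E \<beta>"
proof -
  interpret unital_ideal_family E "gr_ids G m i"
    using unital_ideal_family_gr_ids[OF assms(4,5)] .
  define T where "T = gr_ids H m i"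
  have HG: "H \<subseteq> G" using assms(7) unfolding subgroupoid_def by blast
  have T: "finite T" "T \<subseteq> gr_ids G m i"
    using HG assms(3) finite_subset unfolding T_def gr_ids_def by auto
  have E_eq: "E h = E (gr_r m i h)" and r_mem: "gr_r m i h \<in> T" if "h \<in> H" for h
    using assms(4) HG that unfolding unital_action_def T_def gr_ids_def by auto
  have "\<forall>h\<in>H. E h \<subseteq> sum_of_ideals E T"
    using mem_sum_of_ideals[OF T r_mem] E_eq by blast
  moreover have "\<forall>h\<in>H. \<forall>z\<in>E h. (\<Sum>e\<in>T. one_of (E e)) * z = z"
    using sum_one_of_mult(1)[OF T r_mem] E_eq by blast
  moreover have "\<forall>x. x * (\<Sum>e\<in>T. one_of (E e)) \<in> sum_of_ideals E T"
    using sum_of_ideals_mult(1)[OF T(2)] is_unit_of_sum_of_ideals[OF T]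
    unfolding is_unit_of_def by simp
  ultimately show ?thesis
    using unital_action_subgroupoid[OF assms(4,7) k_algebra_set_sum_of_ideals[OF T]]
      galois_ext_subgroupoid[OF assms(2,4,6,7)] unfolding T_def by blast
qed

end
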